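(* Let $\mathcal{S}=(P,N)$ be a sample with $P\neq\emptyset$, and let $\varphi$ be an LTL formula in negation normal form such that for every $M\in P$ and every state $s$ of $M$, $\mathrm{Pr}^{M}(s\models\varphi)=0$. Consider PLTL formulas of the form $\mathbf{P}_{>r}[\psi]$ with $r\in[0,1]$ and $\psi$ an LTL formula in negation normal form. If $\mathbf{P}_{>r}[\psi]$ is consistent with $\mathcal{S}$ and has minimal size among all consistent formulas of this form, then $\varphi$ is not a subformula of $\psi$.
   Context: A DTMC is a tuple $M=(S,s_I,P,\mathrm{AP},\ell)$ with finite state set $S$, initial state $s_I$, transition probabilities $P:S\times S\to[0,1]$, atomic propositions $\mathrm{AP}$ and labelling $\ell:S\to2^{\mathrm{AP}}$; $\mathrm{Pr}^M_s$ is the standard probability measure on infinite paths from $s$, and $\mathrm{Pr}^M(s\models\varphi)$ is the probability of the set of paths from $s$ satisfying the LTL formula $\varphi$. LTL formulas in negation normal form (NNF) are built from literals $p,\neg p$ ($p\in\mathrm{AP}$) using $\land,\lor,\mathbf{X},\mathbf{F},\mathbf{G},\mathbf{U}$ (negation only applied to atomic propositions), with the standard path semantics ($\mathbf{F}\varphi=\mathrm{true}\,\mathbf{U}\,\varphi$, $\mathbf{G}\varphi=\neg\mathbf{F}\neg\varphi$). The size of a formula is the number of occurrences of operators in $\{\mathbf{F},\mathbf{X},\mathbf{G},\mathbf{U},\land,\lor\}$ plus the number of occurrences of literals; the size of $\mathbf{P}_{>r}[\psi]$ is the size of $\psi$. A state $s$ satisfies $\mathbf{P}_{>r}[\psi]$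 iff $\mathrm{Pr}^M(s\models\psi)>r$, and a DTMC satisfies it iff its initial state does. A sample $\mathcal{S}=(P,N)$ consists of finite sets $P$ (positive) and $N$ (negative) of DTMCs over the same $\mathrm{AP}$; a formula is consistent with $\mathcal{S}$ if all DTMCs in $P$ satisfy it and no DTMC in $N$ satisfies it. *)

theory Defs
  imports "HOL-Probability.Probability"
begin

record ('s, 'p) dtmc =
  dtmc_states :: "'s set"
  dtmc_init   :: 's
  dtmc_P      :: "'s \<Rightarrow> 's \<Rightarrow> real"
  dtmc_label  :: "'s \<Rightarrow> 'p set"

definition wf_dtmc :: "'p set \<Rightarrow> ('s, 'p) dtmc \<Rightarrow> bool" where
  "wf_dtmc AP M \<longleftrightarrow>
     finite (dtmc_states M) \<and> dtmc_init M \<in> dtmc_states M \<and>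
     (\<forall>s t. 0 \<le> dtmc_P M s t \<and> dtmc_P M s t \<le> 1) \<and>
     (\<forall>s\<in>dtmc_states M. \<forall>t. t \<notin> dtmc_states M \<longrightarrow> dtmc_P M s t = 0) \<and>
     (\<forall>s\<in>dtmc_states M. (\<Sum>t\<in>dtmc_states M. dtmc_P M s t) = 1) \<and>
     (\<forall>s\<in>dtmc_states M. dtmc_label M s \<subseteq> AP)"

fun path_prob :: "('s, 'p) dtmc \<Rightarrow> 's \<Rightarrow> 's list \<Rightarrow> real" where
  "path_prob M s [] = 1"
| "path_prob M s (t # ts) = dtmc_P M s t * path_prob M t ts"

definition paths :: "('s, 'p) dtmc \<Rightarrow> 's \<Rightarrow> 's stream measure" where
  "paths M s = (THE \<mu>.
      sets \<mu> = sets (stream_space (count_space (dtmc_states M))) \<and>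
      prob_space \<mu> \<and>
      (\<forall>ts. set ts \<subseteq> dtmc_states M \<longrightarrow>
         emeasure \<mu> {\<omega> \<in> streams (dtmc_states M). stake (Suc (length ts)) \<omega> = s # ts}
           = ennreal (path_prob M s ts)))"

datatype 'p ltl =
    Lit 'p
  | NLit 'p
  | And "'p ltl" "'p ltl"
  | Or "'p ltl" "'p ltl"
  | Next "'p ltl"
  | Eventually "'p ltl"
  | Always "'p ltl"
  | Until "'p ltl" "'p ltl"

fun ltl_sat :: "('s \<Rightarrow> 'p set) \<Rightarrow> 's stream \<Rightarrow> 'p ltl \<Rightarrow> bool" where
  "ltl_sat l w (Lit p) \<longleftrightarrow> p \<in> l (shd w)"
| "ltl_sat l w (NLit p) \<longleftrightarrow> p \<notin> l (shd w)"
| "ltl_sat l w (And \<phi> \<psi>) \<longleftrightarrow> ltl_sat l w \<phi> \<and> ltl_sat l w \<psi>"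
| "ltl_sat l w (Or \<phi> \<psi>) \<longleftrightarrow> ltl_sat l w \<phi> \<or> ltl_sat l w \<psi>"
| "ltl_sat l w (Next \<phi>) \<longleftrightarrow> ltl_sat l (stl w) \<phi>"
| "ltl_sat l w (Eventually \<phi>) \<longleftrightarrow> (\<exists>i. ltl_sat l (sdrop i w) \<phi>)"
| "ltl_sat l w (Always \<phi>) \<longleftrightarrow> (\<forall>i. ltl_sat l (sdrop i w) \<phi>)"
| "ltl_sat l w (Until \<phi> \<psi>) \<longleftrightarrow>
     (\<exists>i. ltl_sat l (sdrop i w) \<psi> \<and> (\<forall>j<i. ltl_sat l (sdrop j w) \<phi>))"

fun ltl_size :: "'p ltl \<Rightarrow> nat" where
  "ltl_size (Lit p) = 1"
| "ltl_size (NLit p) = 1"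
| "ltl_size (And \<phi> \<psi>) = 1 + ltl_size \<phi> + ltl_size \<psi>"
| "ltl_size (Or \<phi> \<psi>) = 1 + ltl_size \<phi> + ltl_size \<psi>"
| "ltl_size (Next \<phi>) = 1 + ltl_size \<phi>"
| "ltl_size (Eventually \<phi>) = 1 + ltl_size \<phi>"
| "ltl_size (Always \<phi>) = 1 + ltl_size \<phi>"
| "ltl_size (Until \<phi> \<psi>) = 1 + ltl_size \<phi> + ltl_size \<psi>"

fun atoms :: "'p ltl \<Rightarrow> 'p set" where
  "atoms (Lit p) = {p}"
| "atoms (NLit p) = {p}"
| "atoms (And \<phi> \<psi>) = atoms \<phi> \<union> atoms \<psi>"
| "atoms (Or \<phi> \<psi>) = atoms \<phi> \<union> atoms \<psi>"
| "atoms (Next \<phi>) = atoms \<phi>"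
| "atoms (Eventually \<phi>) = atoms \<phi>"
| "atoms (Always \<phi>) = atoms \<phi>"
| "atoms (Until \<phi> \<psi>) = atoms \<phi> \<union> atoms \<psi>"

fun subformulas :: "'p ltl \<Rightarrow> 'p ltl set" where
  "subformulas (Lit p) = {Lit p}"
| "subformulas (NLit p) = {NLit p}"
| "subformulas (And \<phi> \<psi>) = insert (And \<phi> \<psi>) (subformulas \<phi> \<union> subformulas \<psi>)"
| "subformulas (Or \<phi> \<psi>) = insert (Or \<phi> \<psi>) (subformulas \<phi> \<union> subformulas \<psi>)"
| "subformulas (Next \<phi>) = insert (Next \<phi>) (subformulas \<phi>)"
| "subformulas (Eventually \<phi>) = insert (Eventually \<phi>) (subformulas \<phi>)"
| "subformulas (Always \<phi>) = insert (Always \<phi>) (subformulas \<phi>)"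
| "subformulas (Until \<phi> \<psi>) = insert (Until \<phi> \<psi>) (subformulas \<phi> \<union> subformulas \<psi>)"

definition Pr :: "('s, 'p) dtmc \<Rightarrow> 's \<Rightarrow> 'p ltl \<Rightarrow> real" where
  "Pr M s \<phi> = measure (paths M s) {\<omega> \<in> space (paths M s). ltl_sat (dtmc_label M) \<omega> \<phi>}"

definition sat_PLTL :: "('s, 'p) dtmc \<Rightarrow> real \<Rightarrow> 'p ltl \<Rightarrow> bool" where
  "sat_PLTL M r \<psi> \<longleftrightarrow> Pr M (dtmc_init M) \<psi> > r"

definition sample :: "'p set \<Rightarrow> ('s, 'p) dtmc set \<Rightarrow> ('s, 'p) dtmc set \<Rightarrow> bool" where
  "sample AP Pos Neg \<longleftrightarrow> finite Pos \<and> finite Neg \<and> (\<forall>M \<in> Pos \<union> Neg. wf_dtmc AP M)"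

definition consistent :: "('s, 'p) dtmc set \<Rightarrow> ('s, 'p) dtmc set \<Rightarrow> real \<Rightarrow> 'p ltl \<Rightarrow> bool" where
  "consistent Pos Neg r \<psi> \<longleftrightarrow> (\<forall>M\<in>Pos. sat_PLTL M r \<psi>) \<and> (\<forall>M\<in>Neg. \<not> sat_PLTL M r \<psi>)"

end

theory Submission
  imports Defs
begin

(*
  On a positive model the event "phi holds at some position of the path" is null: by the
  Markov property, the probability that phi holds at position i is an average of the
  probabilities Pr(t |= phi) = 0 over the states t reachable in i steps. Along paths that
  avoid phi, every occurrence of phi in psi can be replaced by false and the result
  simplified. Either psi collapses to false, which contradicts Pr(psi) > r >= 0 on a
  positive model, or it becomes a strictly smaller formula psi' that implies psi on every
  path and agrees with psi almost surely on positive models. Then P_{>r}[psi'] is still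
  consistent with the sample, contradicting minimality.

  Since paths is only characterised by its cylinder probabilities, the Markov property is
  obtained from an explicit model of the chain: a path is generated by iterating
  independent random successor functions.
*)

section \<open>Trajectories of random successor functions\<close>

primcorec trajectory :: "('s \<Rightarrow> 's) \<Rightarrow> 's \<Rightarrow> ('s \<Rightarrow> 's) stream \<Rightarrow> 's stream" where
  "trajectory c s \<omega> = s ## trajectory c (c (shd \<omega> s)) (stl \<omega>)"

lemma trajectory_Stream: "trajectory c s (f ## \<omega>) = s ## trajectory c (c (f s)) \<omega>"
  by (subst trajectory.code) simp

lemma trajectory_in_streams:
  assumes "s \<in> S" and "\<And>x. c x \<in> S"
  shows "trajectory c s \<omega> \<in> streams S"
proof -
  have "trajectory c s \<omega> !! n \<in> S" if "s \<in> S" for n s \<omega>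
    using that by (induction n arbitrary: s \<omega>) (auto simp: assms(2))
  then show ?thesis using assms(1) by (simp add: streams_iff_snth)
qed

lemma measurable_trajectory:
  fixes N :: "('s \<Rightarrow> 's) pmf"
  assumes "countable S" and c: "\<And>x. c x \<in> S"
    and h: "h \<in> measurable (stream_space (measure_pmf N)) (count_space S)"
  shows "(\<lambda>\<omega>. trajectory c (h \<omega>) (sdrop k \<omega>))
           \<in> measurable (stream_space (measure_pmf N)) (stream_space (count_space S))"
proof -
  let ?\<Omega> = "stream_space (measure_pmf N)"
  define F where "F g \<longleftrightarrow> (\<exists>h k. h \<in> measurable ?\<Omega> (count_space S) \<and>
      g = (\<lambda>\<omega>. trajectory c (h \<omega>) (sdrop k \<omega>)))" for g
  have "F (\<lambda>\<omega>. trajectory c (h \<omega>) (sdrop k \<omega>))" using h unfolding F_def by blast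
  then show ?thesis
  proof (rule measurable_stream_coinduct[of F])
    show "(\<lambda>\<omega>. shd (g \<omega>)) \<in> measurable ?\<Omega> (count_space S)" if "F g" for g
      using that unfolding F_def by auto
  next
    fix g assume "F g"
    then obtain h k where h: "h \<in> measurable ?\<Omega> (count_space S)"
      and g: "g = (\<lambda>\<omega>. trajectory c (h \<omega>) (sdrop k \<omega>))" unfolding F_def by blast
    have "(\<lambda>\<omega>. c ((\<omega> !! k) u)) \<in> measurable ?\<Omega> (count_space S)" for u
    proof -
      have "(\<lambda>f. c (f u)) \<in> measurable (measure_pmf N) (count_space S)" using c by simp
      from measurable_compose[OF measurable_snth this] show ?thesis .
    qed
    then have "(\<lambda>\<omega>. c ((\<omega> !! k) (h \<omega>))) \<in> measurable ?\<Omega> (count_space S)"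
      using assms(1) by (rule measurable_compose_countable'[OF _ h])
    moreover have "(\<lambda>\<omega>. stl (g \<omega>)) = (\<lambda>\<omega>. trajectory c (c ((\<omega> !! k) (h \<omega>))) (sdrop (Suc k) \<omega>))"
      unfolding g by simp
    ultimately show "F (\<lambda>\<omega>. stl (g \<omega>))" unfolding F_def by blast
  qed
qed

lemma sets_scylinder_singletons:
  "set xs \<subseteq> S \<Longrightarrow> scylinder S (map (\<lambda>x. {x}) xs) \<in> sets (stream_space (count_space S))"
  using sets_scylinder[of "map (\<lambda>x. {x}) xs" "count_space S"] by auto

lemma stake_cylinder_eq_scylinder:
  "{\<omega> \<in> streams S. stake (Suc (length ts)) \<omega> = x # ts} = scylinder S (map (\<lambda>x. {x}) (x # ts))"
proof (induction ts arbitrary: x)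
  case Nil
  then show ?case by (auto simp: streams_stl)
next
  case (Cons t ts)
  have "{\<omega> \<in> streams S. stake (Suc (length (t # ts))) \<omega> = x # t # ts}
      = {\<omega> \<in> streams S. shd \<omega> = x \<and> stl \<omega> \<in> {\<omega> \<in> streams S. stake (Suc (length ts)) \<omega> = t # ts}}"
    by (auto simp: streams_stl)
  then show ?case by (simp only: Cons.IH) simp
qed

lemma measurable_ltl_sat[measurable]:
  "Measurable.pred (stream_space (count_space S)) (\<lambda>\<omega>. ltl_sat l \<omega> \<phi>)"
proof (induction \<phi>)
  case (Until a b)
  note [measurable] = Until.IH
  show ?case by simp
qed (simp_all, (rule measurable_compose[OF measurable_shd], simp)+)

section \<open>The path measure of a DTMC\<close>

text \<open>A random successor function chooses the successor of every state independently according
  to its row of the transition matrix. The functions in the support of \<open>succ_fun_pmf\<close>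
  map states to states; \<open>clamp_state\<close> only repairs the others, so that trajectories stay
  in the state space for every sequence of functions.\<close>

definition clamp_state :: "('s, 'p) dtmc \<Rightarrow> 's \<Rightarrow> 's" where
  "clamp_state M x = (if x \<in> dtmc_states M then x else dtmc_init M)"

definition succ_fun_pmf :: "('s, 'p) dtmc \<Rightarrow> ('s \<Rightarrow> 's) pmf" where
  "succ_fun_pmf M = Pi_pmf (dtmc_states M) (dtmc_init M) (\<lambda>s. embed_pmf (dtmc_P M s))"

definition path_measure :: "('s, 'p) dtmc \<Rightarrow> 's \<Rightarrow> 's stream measure" where
  "path_measure M s = distr (stream_space (measure_pmf (succ_fun_pmf M)))
     (stream_space (count_space (dtmc_states M))) (trajectory (clamp_state M) s)"

lemma init_in_states: "wf_dtmc AP M \<Longrightarrow> dtmc_init M \<in> dtmc_states M"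
  by (simp add: wf_dtmc_def)

lemma clamp_state_in_states: "wf_dtmc AP M \<Longrightarrow> clamp_state M x \<in> dtmc_states M"
  by (simp add: clamp_state_def wf_dtmc_def)

lemma pmf_embed_transition:
  assumes wf: "wf_dtmc AP M" and s: "s \<in> dtmc_states M"
  shows "pmf (embed_pmf (dtmc_P M s)) t = dtmc_P M s t"
proof (rule pmf_embed_pmf)
  show "0 \<le> dtmc_P M s t" for t using wf by (simp add: wf_dtmc_def)
  have "(\<integral>\<^sup>+t. ennreal (dtmc_P M s t) \<partial>count_space UNIV) = (\<Sum>t\<in>dtmc_states M. ennreal (dtmc_P M s t))"
    using wf s by (intro nn_integral_count_space') (auto simp: wf_dtmc_def)
  also have "\<dots> = ennreal (\<Sum>t\<in>dtmc_states M. dtmc_P M s t)"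
    using wf by (intro sum_ennreal) (simp add: wf_dtmc_def)
  also have "\<dots> = 1"
    using wf s by (simp add: wf_dtmc_def)
  finally show "(\<integral>\<^sup>+t. ennreal (dtmc_P M s t) \<partial>count_space UNIV) = 1" .
qed

lemma emeasure_succ_fun_pmf:
  assumes wf: "wf_dtmc AP M" and s: "s \<in> dtmc_states M" and t: "t \<in> dtmc_states M"
  shows "emeasure (succ_fun_pmf M) {f. clamp_state M (f s) = t} = ennreal (dtmc_P M s t)"
proof -
  have fin: "finite (dtmc_states M)" using wf by (simp add: wf_dtmc_def)
  have support: "set_pmf (embed_pmf (dtmc_P M s)) \<subseteq> dtmc_states M"
  proof
    fix t assume "t \<in> set_pmf (embed_pmf (dtmc_P M s))"
    then have "dtmc_P M s t \<noteq> 0" by (simp add: set_pmf_eq pmf_embed_transition[OF wf s])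
    then show "t \<in> dtmc_states M" using wf s unfolding wf_dtmc_def by blast
  qed
  have "map_pmf (\<lambda>f. clamp_state M (f s)) (succ_fun_pmf M)
          = map_pmf (clamp_state M) (map_pmf (\<lambda>f. f s) (succ_fun_pmf M))"
    by (simp add: map_pmf_comp)
  also have "map_pmf (\<lambda>f. f s) (succ_fun_pmf M) = embed_pmf (dtmc_P M s)"
    using Pi_pmf_component[OF fin, of s "dtmc_init M"] s by (simp add: succ_fun_pmf_def)
  also have "map_pmf (clamp_state M) (embed_pmf (dtmc_P M s)) = embed_pmf (dtmc_P M s)"
    using support by (intro map_pmf_idI) (auto simp: clamp_state_def)
  finally have marginal: "map_pmf (\<lambda>f. clamp_state M (f s)) (succ_fun_pmf M) = embed_pmf (dtmc_P M s)" .
  have "emeasure (succ_fun_pmf M) {f. clamp_state M (f s) = t}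
          = emeasure (map_pmf (\<lambda>f. clamp_state M (f s)) (succ_fun_pmf M)) {t}"
    by (simp add: vimage_def)
  also have "\<dots> = ennreal (dtmc_P M s t)"
    using marginal pmf_embed_transition[OF wf s] by (simp add: emeasure_pmf_single)
  finally show ?thesis .
qed

lemma measurable_trajectory_clamp:
  assumes wf: "wf_dtmc AP M" and u: "u \<in> dtmc_states M"
  shows "trajectory (clamp_state M) u
           \<in> measurable (stream_space (measure_pmf (succ_fun_pmf M)))
               (stream_space (count_space (dtmc_states M)))"
  using measurable_trajectory[of "dtmc_states M" "clamp_state M" "\<lambda>_. u" "succ_fun_pmf M" 0]
    clamp_state_in_states[OF wf] wf u by (simp add: countable_finite wf_dtmc_def)

lemma sets_path_measure[simp]:
  "sets (path_measure M s) = sets (stream_space (count_space (dtmc_states M)))"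
  by (simp add: path_measure_def)

lemma space_path_measure[simp]: "space (path_measure M s) = streams (dtmc_states M)"
  by (simp add: path_measure_def space_stream_space)

lemma prob_space_path_measure:
  assumes "wf_dtmc AP M" and "u \<in> dtmc_states M"
  shows "prob_space (path_measure M u)"
  unfolding path_measure_def
  by (intro prob_space.prob_space_distr prob_space.prob_space_stream_space
      prob_space_measure_pmf measurable_trajectory_clamp[OF assms])

lemma emeasure_path_measure_first_step:
  assumes wf: "wf_dtmc AP M" and u: "u \<in> dtmc_states M"
    and B: "B \<in> sets (stream_space (count_space (dtmc_states M)))"
    and B': "B' \<in> sets (stream_space (count_space (dtmc_states M)))"
    and shift: "\<And>\<omega>. \<omega> \<in> streams (dtmc_states M) \<Longrightarrow> u ## \<omega> \<in> B \<longleftrightarrow> \<omega> \<in> B'"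
  shows "emeasure (path_measure M u) B
           = (\<integral>\<^sup>+f. emeasure (path_measure M (clamp_state M (f u))) B' \<partial>succ_fun_pmf M)"
proof -
  let ?\<Omega> = "stream_space (measure_pmf (succ_fun_pmf M))"
  have emeasure_eq: "emeasure (path_measure M v) C = emeasure ?\<Omega> (trajectory (clamp_state M) v -` C)"
    if "v \<in> dtmc_states M" "C \<in> sets (stream_space (count_space (dtmc_states M)))" for v C
    using that measurable_trajectory_clamp[OF wf that(1)]
    by (simp add: path_measure_def emeasure_distr space_stream_space)
  have "trajectory (clamp_state M) u -` B \<in> sets ?\<Omega>"
    using measurable_sets[OF measurable_trajectory_clamp[OF wf u] B] by (simp add: space_stream_space)
  then have "emeasure ?\<Omega> (trajectory (clamp_state M) u -` B)
      = (\<integral>\<^sup>+f. emeasure ?\<Omega> {\<omega> \<in> space ?\<Omega>. f ## \<omega> \<in> trajectory (clamp_state M) u -` B} \<partial>succ_fun_pmf M)"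
    by (rule prob_space.emeasure_stream_space[OF prob_space_measure_pmf])
  also have "\<dots> = (\<integral>\<^sup>+f. emeasure (path_measure M (clamp_state M (f u))) B' \<partial>succ_fun_pmf M)"
  proof (rule nn_integral_cong)
    fix f
    have "{\<omega> \<in> space ?\<Omega>. f ## \<omega> \<in> trajectory (clamp_state M) u -` B}
            = trajectory (clamp_state M) (clamp_state M (f u)) -` B'"
      using shift trajectory_in_streams[OF clamp_state_in_states[OF wf] clamp_state_in_states[OF wf]]
      by (auto simp: trajectory_Stream space_stream_space)
    then show "emeasure ?\<Omega> {\<omega> \<in> space ?\<Omega>. f ## \<omega> \<in> trajectory (clamp_state M) u -` B}
                = emeasure (path_measure M (clamp_state M (f u))) B'"
      by (simp add: emeasure_eq[OF clamp_state_in_states[OF wf] B'])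
  qed
  finally show ?thesis by (simp add: emeasure_eq[OF u B])
qed

lemma emeasure_path_measure_stl_null:
  assumes wf: "wf_dtmc AP M" and u: "u \<in> dtmc_states M"
    and A: "A \<in> sets (stream_space (count_space (dtmc_states M)))"
    and null: "\<And>t. t \<in> dtmc_states M \<Longrightarrow> emeasure (path_measure M t) A = 0"
  shows "emeasure (path_measure M u) {\<omega> \<in> streams (dtmc_states M). stl \<omega> \<in> A} = 0"
proof -
  have "{\<omega> \<in> streams (dtmc_states M). stl \<omega> \<in> A} \<in> sets (stream_space (count_space (dtmc_states M)))"
    using measurable_sets[OF measurable_stl A] by (simp add: space_stream_space vimage_def Int_def conj_commute)
  then have "emeasure (path_measure M u) {\<omega> \<in> streams (dtmc_states M). stl \<omega> \<in> A}
      = (\<integral>\<^sup>+f. emeasure (path_measure M (clamp_state M (f u))) A \<partial>succ_fun_pmf M)"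
    using u A by (intro emeasure_path_measure_first_step[OF wf u]) auto
  also have "\<dots> = 0"
    by (simp add: null clamp_state_in_states[OF wf])
  finally show ?thesis .
qed

lemma path_prob_nonneg: "wf_dtmc AP M \<Longrightarrow> 0 \<le> path_prob M s ts"
  by (induction ts arbitrary: s) (auto simp: wf_dtmc_def)

lemma emeasure_path_measure_scylinder:
  assumes wf: "wf_dtmc AP M" and u: "u \<in> dtmc_states M" and "set (x # ts) \<subseteq> dtmc_states M"
  shows "emeasure (path_measure M u) (scylinder (dtmc_states M) (map (\<lambda>x. {x}) (x # ts)))
           = (if x = u then ennreal (path_prob M u ts) else 0)"
  using u assms(3)
proof (induction ts arbitrary: u x)
  case Nil
  have "streams (dtmc_states M) \<in> sets (stream_space (count_space (dtmc_states M)))"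
    using sets.top[of "stream_space (count_space (dtmc_states M))"] by (simp add: space_stream_space)
  then have "emeasure (path_measure M u) (scylinder (dtmc_states M) [{x}])
      = (\<integral>\<^sup>+f. emeasure (path_measure M (clamp_state M (f u)))
           (if x = u then streams (dtmc_states M) else {}) \<partial>succ_fun_pmf M)"
    using Nil.prems sets_scylinder_singletons[of "[x]"]
    by (intro emeasure_path_measure_first_step[OF wf Nil(1)]) auto
  also have "\<dots> = (\<integral>\<^sup>+f. (if x = u then 1 else 0) \<partial>succ_fun_pmf M)"
    using prob_space.emeasure_space_1[OF prob_space_path_measure[OF wf clamp_state_in_states[OF wf]]]
    by (intro nn_integral_cong) simp
  finally show ?case by (simp add: measure_pmf.emeasure_space_1)
next
  case (Cons t ts)
  have t: "t \<in> dtmc_states M" and ts: "set (t # ts) \<subseteq> dtmc_states M" using Cons.prems by auto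
  have "emeasure (path_measure M u) (scylinder (dtmc_states M) (map (\<lambda>x. {x}) (x # t # ts))) =
     (\<integral>\<^sup>+f. emeasure (path_measure M (clamp_state M (f u)))
        (if x = u then scylinder (dtmc_states M) (map (\<lambda>x. {x}) (t # ts)) else {}) \<partial>succ_fun_pmf M)"
    using Cons.prems sets_scylinder_singletons[of "x # t # ts"] sets_scylinder_singletons[of "t # ts"]
    by (intro emeasure_path_measure_first_step[OF wf Cons.prems(1)]) auto
  also have "\<dots> = (\<integral>\<^sup>+f. (if x = u then ennreal (path_prob M t ts) else 0)
                     * indicator {f. clamp_state M (f u) = t} f \<partial>succ_fun_pmf M)"
    using Cons.IH[OF clamp_state_in_states[OF wf] ts]
    by (intro nn_integral_cong) (auto split: split_indicator)
  also have "\<dots> = (if x = u then ennreal (path_prob M t ts) else 0)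
                  * emeasure (succ_fun_pmf M) {f. clamp_state M (f u) = t}"
    by (rule nn_integral_cmult_indicator) simp
  also have "\<dots> = (if x = u then ennreal (path_prob M u (t # ts)) else 0)"
    using emeasure_succ_fun_pmf[OF wf Cons.prems(1) t] path_prob_nonneg[OF wf, of t ts] wf
    by (auto simp: ennreal_mult' mult.commute wf_dtmc_def)
  finally show ?case .
qed

definition is_path_measure :: "('s, 'p) dtmc \<Rightarrow> 's \<Rightarrow> 's stream measure \<Rightarrow> bool" where
  "is_path_measure M s \<mu> \<longleftrightarrow> sets \<mu> = sets (stream_space (count_space (dtmc_states M))) \<and>
      prob_space \<mu> \<and>
      (\<forall>ts. set ts \<subseteq> dtmc_states M \<longrightarrow>
         emeasure \<mu> {\<omega> \<in> streams (dtmc_states M). stake (Suc (length ts)) \<omega> = s # ts}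
           = ennreal (path_prob M s ts))"

lemma paths_def': "paths M s = (THE \<mu>. is_path_measure M s \<mu>)"
  by (simp add: paths_def is_path_measure_def)

lemma is_path_measure_path_measure:
  assumes "wf_dtmc AP M" and "s \<in> dtmc_states M"
  shows "is_path_measure M s (path_measure M s)"
  unfolding is_path_measure_def stake_cylinder_eq_scylinder
  using prob_space_path_measure[OF assms] emeasure_path_measure_scylinder[OF assms, of s] assms(2)
  by (simp del: scylinder.simps)

lemma is_path_measure_scylinder:
  assumes "is_path_measure M s \<mu>" and "set (s # y # ts) \<subseteq> dtmc_states M"
  shows "emeasure \<mu> (scylinder (dtmc_states M) (map (\<lambda>x. {x}) (y # ts)))
           = (if y = s then ennreal (path_prob M s ts) else 0)"
proof -
  interpret prob_space \<mu> using assms(1) by (simp add: is_path_measure_def)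
  let ?C = "\<lambda>y ts. scylinder (dtmc_states M) (map (\<lambda>x. {x}) (y # ts))"
  have sets_eq: "sets \<mu> = sets (stream_space (count_space (dtmc_states M)))"
    using assms(1) by (simp add: is_path_measure_def)
  then have space_eq: "space \<mu> = streams (dtmc_states M)"
    by (simp add: sets_eq_imp_space_eq space_stream_space)
  have cyl: "emeasure \<mu> (?C s ts) = ennreal (path_prob M s ts)" if "set ts \<subseteq> dtmc_states M" for ts
    using assms(1) that unfolding is_path_measure_def stake_cylinder_eq_scylinder by blast
  show ?thesis
  proof (cases "y = s")
    case False
    have "?C y ts \<subseteq> space \<mu> - ?C s []" using False by (auto simp: space_eq)
    moreover have "?C y ts \<in> sets \<mu>" "?C s [] \<in> sets \<mu>"
      using assms(2) sets_scylinder_singletons[of "y # ts"] sets_scylinder_singletons[of "[s]"]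
      by (simp_all add: sets_eq del: scylinder.simps)
    ultimately have "emeasure \<mu> (?C y ts) \<le> emeasure \<mu> (space \<mu> - ?C s [])"
      by (intro emeasure_mono) auto
    also have "\<dots> = 0" using \<open>?C s [] \<in> sets \<mu>\<close> cyl[of "[]"] by (simp add: emeasure_compl emeasure_space_1)
    finally show ?thesis using False by simp
  qed (use cyl assms(2) in simp)
qed

lemma is_path_measure_unique:
  assumes wf: "wf_dtmc AP M" and s: "s \<in> dtmc_states M"
    and \<mu>: "is_path_measure M s \<mu>" and \<nu>: "is_path_measure M s \<nu>"
  shows "\<mu> = \<nu>"
proof -
  let ?S = "dtmc_states M"
  let ?G = "insert {} ((\<lambda>x. {x}) ` ?S)"
  have fin: "finite ?S" using wf by (simp add: wf_dtmc_def)
  show ?thesis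
  proof (rule stream_space_eq_scylinder[where S="count_space ?S" and G="?G" and C="(\<lambda>x. {x}) ` ?S"])
    show "prob_space \<mu>" "prob_space \<nu>"
      "sets \<mu> = sets (stream_space (count_space ?S))" "sets \<nu> = sets (stream_space (count_space ?S))"
      using \<mu> \<nu> by (auto simp: is_path_measure_def)
    show "Int_stable ?G" by (auto simp: Int_stable_def)
    have "sigma_sets ?S ?G = Pow ?S"
    proof
      show "sigma_sets ?S ?G \<subseteq> Pow ?S" using sigma_sets_into_sp[of ?G ?S] by auto
      have "Pow ?S = sigma_sets ?S ((\<lambda>x. {x}) ` ?S)"
        using sigma_sets_singletons[OF countable_finite[OF fin]] by simp
      also have "\<dots> \<subseteq> sigma_sets ?S ?G" by (rule sigma_sets_mono') auto
      finally show "Pow ?S \<subseteq> sigma_sets ?S ?G" .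
    qed
    then show "sets (count_space ?S) = sets (sigma (space (count_space ?S)) ?G)"
      by (subst sets_measure_of) auto
    show "countable ((\<lambda>x. {x}) ` ?S)" by (intro countable_image countable_finite fin)
  next
    fix xs assume "xs \<noteq> []" and xs: "xs \<in> lists ?G"
    show "emeasure \<mu> (scylinder (space (count_space ?S)) xs) = emeasure \<nu> (scylinder (space (count_space ?S)) xs)"
    proof (cases "{} \<in> set xs")
      case True
      then have "scylinder ?S xs = {}" by (induction xs) auto
      then show ?thesis by simp
    next
      case False
      with xs have "xs = map (\<lambda>x. {x}) (map the_elem xs) \<and> set (map the_elem xs) \<subseteq> ?S"
        by (induction xs) auto
      then obtain ys where ys: "xs = map (\<lambda>x. {x}) ys" "set ys \<subseteq> ?S" by blast
      with \<open>xs \<noteq> []\<close> obtain y ts where "ys = y # ts" by (cases ys) auto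
      then show ?thesis
        using ys s is_path_measure_scylinder[OF \<mu>] is_path_measure_scylinder[OF \<nu>]
        by (simp del: scylinder.simps)
    qed
  qed auto
qed

lemma paths_eq_path_measure:
  assumes "wf_dtmc AP M" and "s \<in> dtmc_states M"
  shows "paths M s = path_measure M s"
  unfolding paths_def'
  by (rule the_equality[where P="is_path_measure M s", OF is_path_measure_path_measure[OF assms]])
    (rule is_path_measure_unique[OF assms _ is_path_measure_path_measure[OF assms]])

lemma prob_space_paths:
  "wf_dtmc AP M \<Longrightarrow> s \<in> dtmc_states M \<Longrightarrow> prob_space (paths M s)"
  by (simp add: paths_eq_path_measure prob_space_path_measure)

lemma sets_paths:
  "wf_dtmc AP M \<Longrightarrow> s \<in> dtmc_states M
     \<Longrightarrow> sets (paths M s) = sets (stream_space (count_space (dtmc_states M)))"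
  by (simp add: paths_eq_path_measure)

lemma space_paths:
  "wf_dtmc AP M \<Longrightarrow> s \<in> dtmc_states M \<Longrightarrow> space (paths M s) = streams (dtmc_states M)"
  by (simp add: paths_eq_path_measure)

lemma sets_paths_ltl_sat:
  assumes "wf_dtmc AP M" and "s \<in> dtmc_states M"
  shows "{\<omega> \<in> space (paths M s). ltl_sat l \<omega> \<theta>} \<in> sets (paths M s)"
  using measurable_ltl_sat[where S="dtmc_states M" and l=l and \<phi>=\<theta>]
  by (simp add: pred_def space_stream_space space_paths[OF assms] sets_paths[OF assms])

section \<open>Eliminating a subformula\<close>

text \<open>\<open>elim \<phi> \<theta>\<close> replaces every occurrence of \<open>\<phi>\<close> in \<open>\<theta>\<close> by false and simplifies;
  \<^const>\<open>None\<close> stands for false, which has no counterpart among LTL formulas in negation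
  normal form.\<close>

definition avoids :: "('s \<Rightarrow> 'p set) \<Rightarrow> 'p ltl \<Rightarrow> 's stream \<Rightarrow> bool" where
  "avoids l \<phi> w \<longleftrightarrow> (\<forall>i. \<not> ltl_sat l (sdrop i w) \<phi>)"

fun elim :: "'p ltl \<Rightarrow> 'p ltl \<Rightarrow> 'p ltl option" where
  "elim \<phi> (Lit p) = (if Lit p = \<phi> then None else Some (Lit p))"
| "elim \<phi> (NLit p) = (if NLit p = \<phi> then None else Some (NLit p))"
| "elim \<phi> (And a b) = (if And a b = \<phi> then None else
     (case elim \<phi> a of None \<Rightarrow> None
      | Some x \<Rightarrow> (case elim \<phi> b of None \<Rightarrow> None | Some y \<Rightarrow> Some (And x y))))"
| "elim \<phi> (Or a b) = (if Or a b = \<phi> then None else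
     (case elim \<phi> a of None \<Rightarrow> elim \<phi> b
      | Some x \<Rightarrow> (case elim \<phi> b of None \<Rightarrow> Some x | Some y \<Rightarrow> Some (Or x y))))"
| "elim \<phi> (Next a) = (if Next a = \<phi> then None else map_option Next (elim \<phi> a))"
| "elim \<phi> (Eventually a) =
     (if Eventually a = \<phi> then None else map_option Eventually (elim \<phi> a))"
| "elim \<phi> (Always a) = (if Always a = \<phi> then None else map_option Always (elim \<phi> a))"
| "elim \<phi> (Until a b) = (if Until a b = \<phi> then None else
     (case elim \<phi> b of None \<Rightarrow> None
      | Some y \<Rightarrow> (case elim \<phi> a of None \<Rightarrow> Some y | Some x \<Rightarrow> Some (Until x y))))"

lemma avoids_sdrop: "avoids l \<phi> w \<Longrightarrow> avoids l \<phi> (sdrop k w)"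
  by (simp add: avoids_def)

lemma avoids_stl: "avoids l \<phi> w \<Longrightarrow> avoids l \<phi> (stl w)"
  using avoids_sdrop[of l \<phi> w 1] by simp

lemma avoids_not_sat: "avoids l \<phi> w \<Longrightarrow> \<not> ltl_sat l w \<phi>"
  unfolding avoids_def by (metis sdrop.simps(1))

lemma ltl_sat_elim_imp: "elim \<phi> \<theta> = Some \<theta>' \<Longrightarrow> ltl_sat l w \<theta>' \<Longrightarrow> ltl_sat l w \<theta>"
proof (induction \<theta> arbitrary: \<theta>' w)
  case (Until a b)
  from Until.prems(1) obtain b' where b': "elim \<phi> b = Some b'"
    by (auto split: if_splits option.splits)
  show ?case
  proof (cases "elim \<phi> a")
    case None
    with Until.prems(1) b' have "\<theta>' = b'" by (simp split: if_splits)
    with Until.IH(2)[OF b'] Until.prems(2) show ?thesis by (auto intro: exI[of _ 0])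
  next
    case (Some a')
    with Until.prems(1) b' have "\<theta>' = Until a' b'" by (simp split: if_splits)
    with Until.IH(1)[OF Some] Until.IH(2)[OF b'] Until.prems(2) show ?thesis by auto
  qed
qed (fastforce split: if_splits option.splits)+

lemma ltl_sat_elim_if_avoids:
  assumes "avoids l \<phi> w" and "ltl_sat l w \<theta>"
  shows "\<exists>\<theta>'. elim \<phi> \<theta> = Some \<theta>' \<and> ltl_sat l w \<theta>'"
  using assms
proof (induction \<theta> arbitrary: w)
  case (Lit p)
  with avoids_not_sat show ?case by fastforce
next
  case (NLit p)
  with avoids_not_sat show ?case by fastforce
next
  case (And a b)
  have "And a b \<noteq> \<phi>" using And.prems avoids_not_sat by blast
  moreover from And obtain a' b'
    where "elim \<phi> a = Some a'" "ltl_sat l w a'" "elim \<phi> b = Some b'" "ltl_sat l w b'"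
    by (meson ltl_sat.simps(3))
  ultimately show ?case by simp
next
  case (Or a b)
  have "Or a b \<noteq> \<phi>" using Or.prems avoids_not_sat by blast
  from Or consider a' where "elim \<phi> a = Some a'" "ltl_sat l w a'"
    | b' where "elim \<phi> b = Some b'" "ltl_sat l w b'"
    by (meson ltl_sat.simps(4))
  then show ?case using \<open>Or a b \<noteq> \<phi>\<close> by cases (simp_all split: option.split)
next
  case (Next a)
  have "Next a \<noteq> \<phi>" using Next.prems avoids_not_sat by blast
  moreover from Next.IH[OF avoids_stl[OF Next.prems(1)]] Next.prems(2)
  obtain a' where "elim \<phi> a = Some a'" "ltl_sat l (stl w) a'" by auto
  ultimately show ?case by simp
next
  case (Eventually a)
  have "Eventually a \<noteq> \<phi>" using Eventually.prems avoids_not_sat by blast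
  moreover from Eventually.prems(2) obtain i where "ltl_sat l (sdrop i w) a" by auto
  with Eventually.IH[OF avoids_sdrop[OF Eventually.prems(1)]]
  obtain a' where "elim \<phi> a = Some a'" "ltl_sat l (sdrop i w) a'" by blast
  ultimately show ?case by auto
next
  case (Always a)
  have "Always a \<noteq> \<phi>" using Always.prems avoids_not_sat by blast
  have a: "\<exists>a'. elim \<phi> a = Some a' \<and> ltl_sat l (sdrop i w) a'" for i
    using Always.IH[OF avoids_sdrop[OF Always.prems(1)]] Always.prems(2) by simp
  then obtain a' where a': "elim \<phi> a = Some a'" by blast
  with a have "\<forall>i. ltl_sat l (sdrop i w) a'" by fastforce
  with a' \<open>Always a \<noteq> \<phi>\<close> show ?case by simp
next
  case (Until a b)
  have "Until a b \<noteq> \<phi>" using Until.prems avoids_not_sat by blast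
  from Until.prems(2) obtain i where i: "ltl_sat l (sdrop i w) b" "\<forall>j<i. ltl_sat l (sdrop j w) a"
    by auto
  from Until.IH(2)[OF avoids_sdrop[OF Until.prems(1)] i(1)]
  obtain b' where b': "elim \<phi> b = Some b'" "ltl_sat l (sdrop i w) b'" by blast
  have a: "\<exists>a'. elim \<phi> a = Some a' \<and> ltl_sat l (sdrop j w) a'" if "j < i" for j
    using Until.IH(1)[OF avoids_sdrop[OF Until.prems(1)]] i(2) that by blast
  show ?case
  proof (cases "elim \<phi> a")
    case None
    then have "i = 0" using a by (metis neq0_conv option.distinct(1))
    with b' None \<open>Until a b \<noteq> \<phi>\<close> show ?thesis by simp
  next
    case (Some a')
    then have "\<forall>j<i. ltl_sat l (sdrop j w) a'" using a by fastforce
    with b' Some \<open>Until a b \<noteq> \<phi>\<close> show ?thesis by auto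
  qed
qed

lemma ltl_size_elim_le: "elim \<phi> \<theta> = Some \<theta>' \<Longrightarrow> ltl_size \<theta>' \<le> ltl_size \<theta>"
  by (induction \<theta> arbitrary: \<theta>') (auto split: if_splits option.splits)

lemma ltl_size_elim_less:
  "elim \<phi> \<theta> = Some \<theta>' \<Longrightarrow> \<phi> \<in> subformulas \<theta> \<Longrightarrow> ltl_size \<theta>' < ltl_size \<theta>"
  by (induction \<theta> arbitrary: \<theta>')
    (auto split: if_splits option.splits dest: ltl_size_elim_le)

lemma atoms_elim: "elim \<phi> \<theta> = Some \<theta>' \<Longrightarrow> atoms \<theta>' \<subseteq> atoms \<theta>"
  by (induction \<theta> arbitrary: \<theta>') (auto split: if_splits option.splits)

section \<open>Minimal consistent formulas\<close>

lemma AE_paths_avoids: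
  assumes wf: "wf_dtmc AP M" and null: "\<forall>t\<in>dtmc_states M. Pr M t \<phi> = 0"
    and s: "s \<in> dtmc_states M"
  shows "AE \<omega> in paths M s. avoids (dtmc_label M) \<phi> \<omega>"
proof -
  let ?S = "dtmc_states M" and ?l = "dtmc_label M"
  define A where "A i = {\<omega> \<in> streams ?S. ltl_sat ?l (sdrop i \<omega>) \<phi>}" for i
  have A_sets: "A i \<in> sets (stream_space (count_space ?S))" for i
  proof -
    have "Measurable.pred (stream_space (count_space ?S)) (\<lambda>\<omega>. ltl_sat ?l (sdrop i \<omega>) \<phi>)"
      by measurable
    then show ?thesis by (simp add: pred_def space_stream_space A_def)
  qed
  have "emeasure (path_measure M t) (A i) = 0" if "t \<in> ?S" for t i
    using that
  proof (induction i arbitrary: t)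
    case 0
    interpret prob_space "path_measure M t" by (rule prob_space_path_measure[OF wf 0])
    show ?case
      using null[rule_format, OF 0] by (simp add: Pr_def paths_eq_path_measure[OF wf 0] A_def emeasure_eq_measure)
  next
    case (Suc i)
    have "A (Suc i) = {\<omega> \<in> streams ?S. stl \<omega> \<in> A i}"
      by (auto simp: A_def streams_stl)
    then show ?case
      using emeasure_path_measure_stl_null[OF wf Suc.prems A_sets Suc.IH] by simp
  qed
  then have "(\<Union>i. A i) \<in> null_sets (path_measure M s)"
    using s A_sets by (intro null_setsI emeasure_UN_eq_0) auto
  then show ?thesis
    unfolding paths_eq_path_measure[OF wf s]
    by (rule AE_I') (auto simp: A_def avoids_def)
qed

lemma Pr_mono:
  assumes "wf_dtmc AP M" and "s \<in> dtmc_states M"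
    and "\<And>\<omega>. ltl_sat (dtmc_label M) \<omega> \<theta>' \<Longrightarrow> ltl_sat (dtmc_label M) \<omega> \<theta>"
  shows "Pr M s \<theta>' \<le> Pr M s \<theta>"
proof -
  interpret prob_space "paths M s" by (rule prob_space_paths[OF assms(1,2)])
  show ?thesis
    unfolding Pr_def using assms(3) sets_paths_ltl_sat[OF assms(1,2)]
    by (intro finite_measure_mono) auto
qed

lemma Pr_cong_AE:
  assumes "wf_dtmc AP M" and "s \<in> dtmc_states M"
    and "AE \<omega> in paths M s. ltl_sat (dtmc_label M) \<omega> \<theta>' \<longleftrightarrow> ltl_sat (dtmc_label M) \<omega> \<theta>"
  shows "Pr M s \<theta>' = Pr M s \<theta>"
  unfolding Pr_def using assms(3) sets_paths_ltl_sat[OF assms(1,2)]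
  by (intro measure_eq_AE) auto

lemma Pr_eq_0_AE:
  assumes "wf_dtmc AP M" and "s \<in> dtmc_states M"
    and "AE \<omega> in paths M s. \<not> ltl_sat (dtmc_label M) \<omega> \<theta>"
  shows "Pr M s \<theta> = 0"
proof -
  have "Pr M s \<theta> = measure (paths M s) {}"
    unfolding Pr_def using assms(3) sets_paths_ltl_sat[OF assms(1,2)]
    by (intro measure_eq_AE) auto
  then show ?thesis by simp
qed

lemma consistent_elim:
  assumes wf: "\<And>M. M \<in> Pos \<union> Neg \<Longrightarrow> wf_dtmc AP M"
    and avoid: "\<And>M. M \<in> Pos \<Longrightarrow> AE \<omega> in paths M (dtmc_init M). avoids (dtmc_label M) \<phi> \<omega>"
    and "consistent Pos Neg r \<psi>" and elim: "elim \<phi> \<psi> = Some \<psi>'"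
  shows "consistent Pos Neg r \<psi>'"
  unfolding consistent_def
proof (intro conjI ballI)
  fix M
  assume M: "M \<in> Pos"
  have "AE \<omega> in paths M (dtmc_init M). ltl_sat (dtmc_label M) \<omega> \<psi>' \<longleftrightarrow> ltl_sat (dtmc_label M) \<omega> \<psi>"
    using avoid[OF M] by eventually_elim
      (use elim ltl_sat_elim_imp ltl_sat_elim_if_avoids in fastforce)
  then have "Pr M (dtmc_init M) \<psi>' = Pr M (dtmc_init M) \<psi>"
    using M wf[of M] init_in_states[OF wf[of M]] by (intro Pr_cong_AE) auto
  then show "sat_PLTL M r \<psi>'"
    using M \<open>consistent Pos Neg r \<psi>\<close> by (simp add: consistent_def sat_PLTL_def)
next
  fix M
  assume M: "M \<in> Neg"
  have "Pr M (dtmc_init M) \<psi>' \<le> Pr M (dtmc_init M) \<psi>"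
    using M wf[of M] init_in_states[OF wf[of M]] ltl_sat_elim_imp[OF elim] by (intro Pr_mono) auto
  then show "\<not> sat_PLTL M r \<psi>'"
    using M \<open>consistent Pos Neg r \<psi>\<close> by (auto simp: consistent_def sat_PLTL_def)
qed

theorem lemma3:
  fixes AP :: "'p set" and Pos Neg :: "('s, 'p) dtmc set"
    and \<phi> \<psi> :: "'p ltl" and r :: real
  assumes "sample AP Pos Neg"
    and "Pos \<noteq> {}"
    and "atoms \<phi> \<subseteq> AP"
    and "\<forall>M\<in>Pos. \<forall>s\<in>dtmc_states M. Pr M s \<phi> = 0"
    and "r \<in> {0..1}" and "atoms \<psi> \<subseteq> AP"
    and "consistent Pos Neg r \<psi>"
    and "\<forall>r' \<psi>'. r' \<in> {0..1} \<and> atoms \<psi>' \<subseteq> AP \<and> consistent Pos Neg r' \<psi>'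
           \<longrightarrow> ltl_size \<psi> \<le> ltl_size \<psi>'"
  shows "\<phi> \<notin> subformulas \<psi>"
proof
  assume sub: "\<phi> \<in> subformulas \<psi>"
  have wf: "wf_dtmc AP M" if "M \<in> Pos \<union> Neg" for M
    using assms(1) that by (simp add: sample_def)
  have avoid: "AE \<omega> in paths M (dtmc_init M). avoids (dtmc_label M) \<phi> \<omega>" if "M \<in> Pos" for M
    using that assms(4) wf[of M] init_in_states[OF wf[of M]] by (intro AE_paths_avoids) auto
  show False
  proof (cases "elim \<phi> \<psi>")
    case None
    obtain M where M: "M \<in> Pos" using assms(2) by blast
    have "AE \<omega> in paths M (dtmc_init M). \<not> ltl_sat (dtmc_label M) \<omega> \<psi>"
      using avoid[OF M] by eventually_elim (use None ltl_sat_elim_if_avoids in fastforce)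
    then have "Pr M (dtmc_init M) \<psi> = 0"
      using M wf[of M] init_in_states[OF wf[of M]] by (intro Pr_eq_0_AE) auto
    moreover have "r < Pr M (dtmc_init M) \<psi>"
      using M assms(7) by (simp add: consistent_def sat_PLTL_def)
    ultimately show False using assms(5) by simp
  next
    case (Some \<psi>')
    have "consistent Pos Neg r \<psi>'"
      using wf avoid assms(7) Some by (rule consistent_elim)
    moreover have "atoms \<psi>' \<subseteq> AP" using atoms_elim[OF Some] assms(6) by blast
    ultimately have "ltl_size \<psi> \<le> ltl_size \<psi>'" using assms(5,8) by blast
    with ltl_size_elim_less[OF Some sub] show False by simp
  qed
qed

end
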